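(* Fix any quantile vector $\mathbf{q}=(q_1\ge q_2\ge\dots\ge q_N)$ with $q_i\in(0,1)$. Then $\mathrm{STR}(\mathbf{q},\pi)\ge \mathrm{OPT}(\mathbf{q},\pi)$ for every assignment $\pi\in\mathcal{E}_1$. Moreover, with $\pi$ uniformly random from $\Pi_{n,m,c}$, $\mathbb{E}_\pi[\mathrm{STR}(\mathbf{q},\pi)-\mathrm{OPT}(\mathbf{q},\pi)\mid \mathcal{E}_1]\ge \mathbb{E}_{i,j}[b(q_i)-s(q_j)]$, where $i$ is uniform on $I_1$ and $j$ is uniform on $J_1$, independently.
   Context: Setting: distributions $F_B,F_S$ with quantile functions $b(q)=\inf\{x:\Pr_{b\sim F_B}[b\le x]\ge q\}$, $s(q)=\inf\{x:\Pr_{s\sim F_S}[s\le x]\ge q\}$, and $F_B$ first-order stochastically dominates $F_S$, i.e. $b(q)\ge s(q)$ for all $q\in(0,1)$. Integers $m\ge n\ge 20$ (original buyers, original sellers) and $c\ge1$ (new buyers and new sellers); $N=m+n+2c$. $\Pi_{n,m,c}$ is the set of maps $\pi:[N]\to\{\mathrm{BO},\mathrm{BN},\mathrm{SO},\mathrm{SN}\}$ with $|\pi^{-1}(\mathrm{BO})|=m$, $|\pi^{-1}(\mathrm{SO})|=n$, $|\pi^{-1}(\mathrm{BN})|=|\pi^{-1}(\mathrm{SN})|=c$; write $B_{\mathrm{Old}}^\pi=\pi^{-1}(\mathrm{BO})$, $B_{\mathrm{New}}^\pi=\pi^{-1}(\mathrm{BN})$, $S_{\mathrm{Old}}^\pi=\pi^{-1}(\mathrm{SO})$,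 $S_{\mathrm{New}}^\pi=\pi^{-1}(\mathrm{SN})$. Given $\mathbf{q}$ and $\pi$, index $i$ labeled as a buyer is a buyer with value $b(q_i)$ and index labeled as a seller is a seller with value $s(q_i)$; the original market consists of the old buyers and old sellers, the augmented market of all agents. $\mathrm{OPT}(\mathbf{q},\pi)$ is the first-best gains from trade in the original market and $\mathrm{STR}(\mathbf{q},\pi)$ is the gains from trade of Seller Trade Reduction in the augmented market. (First best: with buyer values $b^{(1)}\ge\dots$ and seller values $s^{(1)}\le\dots$, let $r=\max\{i: b^{(i)}\ge s^{(i)}\}$ over $i\le$ min of the side sizes ($r=0$ if none); trade the top $r$ buyers with bottom $r$ sellers, gains $\sum_{i\le r}(b^{(i)}-s^{(i)})$. STR: with $s^{(k)}=\infty$ beyond the number of sellers, if $b^{(r)}\ge s^{(r+1)}$ trade $r$ pairs, else trade only the top $r-1$ buyers with bottom $r-1$ sellers.) Let $p=\lceil n/10\rceil$, $I_1=\{1,\dots,p\}$, $I_2=\{p+1,\dots,2p\}$, $J_1=\{N-p+1,\dots,N\}$, $J_2=\{N-2p+1,\dots,N-p\}$. $\mathcal{E}_1$ is the set of $\pi\in\Pi_{n,m,c}$ with $|I_1\cap B_{\mathrm{New}}^\pi|\ge2$, $|I_2\cap B_{\mathrm{Old}}^\pi|\ge1$, $|J_1\cap S_{\mathrm{New}}^\pi|\ge2$, and $|J_2\cap S_{\mathrm{Old}}^\pi|\ge1$. *)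

theory Defs
  imports "HOL-Probability.Probability"
begin

definition quantile :: "real measure \<Rightarrow> real \<Rightarrow> real" where
  "quantile M u = Inf {x. u \<le> measure M {..x}}"

datatype role = BO | BN | SO | SN

definition assignments :: "nat \<Rightarrow> nat \<Rightarrow> nat \<Rightarrow> (nat \<Rightarrow> role) set" where
  "assignments n m c =
     {\<pi> \<in> {1..m+n+2*c} \<rightarrow>\<^sub>E (UNIV :: role set).
        card {i \<in> {1..m+n+2*c}. \<pi> i = BO} = m \<and>
        card {i \<in> {1..m+n+2*c}. \<pi> i = SO} = n \<and>
        card {i \<in> {1..m+n+2*c}. \<pi> i = BN} = c \<and>
        card {i \<in> {1..m+n+2*c}. \<pi> i = SN} = c}"

definition agents :: "nat \<Rightarrow> (nat \<Rightarrow> role) \<Rightarrow> role set \<Rightarrow> nat set" where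
  "agents N \<pi> R = {i \<in> {1..N}. \<pi> i \<in> R}"

(* first-best number of trades r, from unsorted buyer values bs and seller values ss;
   buyers sorted decreasingly b^(1) >= b^(2) >= ..., sellers increasingly s^(1) <= ... ;
   list index k-1 holds the k-th order statistic *)
definition fb_count :: "real list \<Rightarrow> real list \<Rightarrow> nat" where
  "fb_count bs ss = (let B = rev (sort bs); S = sort ss in
     Max ({0} \<union> {i. 1 \<le> i \<and> i \<le> min (length B) (length S) \<and> S ! (i-1) \<le> B ! (i-1)}))"

definition gains :: "real list \<Rightarrow> real list \<Rightarrow> nat \<Rightarrow> real" where
  "gains bs ss k = (let B = rev (sort bs); S = sort ss in (\<Sum>i<k. B ! i - S ! i))"

definition first_best :: "real list \<Rightarrow> real list \<Rightarrow> real" where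
  "first_best bs ss = gains bs ss (fb_count bs ss)"

(* Seller Trade Reduction: s^(r+1) = infinity if r+1 exceeds the number of sellers *)
definition str_gains :: "real list \<Rightarrow> real list \<Rightarrow> real" where
  "str_gains bs ss = (let r = fb_count bs ss; B = rev (sort bs); S = sort ss in
     if r = 0 then 0
     else if r < length S \<and> S ! r \<le> B ! (r-1) then gains bs ss r
     else gains bs ss (r-1))"

definition vals :: "(real \<Rightarrow> real) \<Rightarrow> (nat \<Rightarrow> real) \<Rightarrow> nat set \<Rightarrow> real list" where
  "vals v q A = map (\<lambda>i. v (q i)) (sorted_list_of_set A)"

(* OPT(q,pi): first best in the original market (old buyers, old sellers) *)
definition OPT_gft :: "(real \<Rightarrow> real) \<Rightarrow> (real \<Rightarrow> real) \<Rightarrow> nat \<Rightarrow> (nat \<Rightarrow> real) \<Rightarrow> (nat \<Rightarrow> role) \<Rightarrow> real" where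
  "OPT_gft b s N q \<pi> = first_best (vals b q (agents N \<pi> {BO})) (vals s q (agents N \<pi> {SO}))"

definition STR_gft :: "(real \<Rightarrow> real) \<Rightarrow> (real \<Rightarrow> real) \<Rightarrow> nat \<Rightarrow> (nat \<Rightarrow> real) \<Rightarrow> (nat \<Rightarrow> role) \<Rightarrow> real" where
  "STR_gft b s N q \<pi> = str_gains (vals b q (agents N \<pi> {BO, BN})) (vals s q (agents N \<pi> {SO, SN}))"

definition pblk :: "nat \<Rightarrow> nat" where
  "pblk n = nat \<lceil>real n / 10\<rceil>"

definition event_E1 :: "nat \<Rightarrow> nat \<Rightarrow> nat \<Rightarrow> (nat \<Rightarrow> role) set" where
  "event_E1 n m c = (let N = m + n + 2*c; p = pblk n in
     {\<pi> \<in> assignments n m c.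
        2 \<le> card ({1..p} \<inter> agents N \<pi> {BN}) \<and>
        1 \<le> card ({p+1..2*p} \<inter> agents N \<pi> {BO}) \<and>
        2 \<le> card ({N-p+1..N} \<inter> agents N \<pi> {SN}) \<and>
        1 \<le> card ({N-2*p+1..N-p} \<inter> agents N \<pi> {SO})})"

end

(*
  On E1 there are two new buyers among the p highest values and two new sellers among the p
  lowest. Let r be the number of efficient trades of the original market and t a price with r old
  buyers above and r old sellers below it. Clamping t into the gap between the lower of the two
  new buyers and the higher of the two new sellers keeps r old traders on each side: if t lies
  above that buyer, the r old buyers above t all precede him, so r < p, while the old sellers from
  his position on, at least n - p of them, all lie below him; symmetrically for sellers. Hence the
  augmented market has at least r + 2 efficient trades, STR executes at least r + 1 of them, and
  comparing with the top r old buyers plus a new buyer i in I1 traded against the bottom r old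
  sellers plus a new seller j in J1 gives STR - OPT >= b(q i) - s(q j). Averaging over the new
  buyers in I1 and the new sellers in J1, and using that E1 is invariant under transpositions
  inside I1 and inside J1, turns this into the bound on the conditional expectation.
*)
theory Submission
  imports Defs "HOL-Combinatorics.Transposition"
begin

section \<open>Order statistics of real lists\<close>

lemma sorted_wrt_filter_nth:
  assumes "sorted_wrt R ys" and "\<And>x y. R x y \<Longrightarrow> P y \<Longrightarrow> P x"
    and "k < length (filter P ys)"
  shows "P (ys ! k)"
  using assms
proof (induction ys arbitrary: k)
  case Nil
  then show ?case by simp
next
  case (Cons y ys)
  show ?case
  proof (cases "P y")
    case True
    then show ?thesis using Cons by (cases k) auto
  next
    case False
    then have "filter P ys = []" using Cons.prems(1,2) by (auto simp: filter_empty_conv)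
    then show ?thesis using Cons.prems(3) False by simp
  qed
qed

lemma le_length_filter_take:
  assumes "k \<le> length ys" and "\<forall>v \<in> set (take k ys). P v"
  shows "k \<le> length (filter P ys)"
proof -
  have "length (filter P ys) = length (filter P (take k ys)) + length (filter P (drop k ys))"
    by (metis append_take_drop_id filter_append length_append)
  moreover have "length (filter P (take k ys)) = k" using assms by simp
  ultimately show ?thesis by linarith
qed

lemma length_filter_rev_sort: "length (filter P (rev (sort xs))) = length (filter P xs)"
  by (simp add: rev_filter[symmetric] filter_sort)

lemma le_rev_sort_nth:
  fixes xs :: "real list"
  assumes "k < length (filter (\<lambda>v. t \<le> v) xs)"
  shows "t \<le> rev (sort xs) ! k"
  using assms sorted_wrt_filter_nth[of "(\<ge>)" "rev (sort xs)" "\<lambda>v. t \<le> v" k]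
  by (simp add: sorted_wrt_rev length_filter_rev_sort)

lemma sort_nth_le:
  fixes xs :: "real list"
  assumes "k < length (filter (\<lambda>v. v \<le> t) xs)"
  shows "sort xs ! k \<le> t"
  using assms sorted_wrt_filter_nth[of "(\<le>)" "sort xs" "\<lambda>v. v \<le> t" k]
  by (simp add: filter_sort)

lemma sum_mset_le_sum_take:
  fixes L :: "real list"
  assumes "sorted_wrt (\<ge>) L" and "A \<subseteq># mset L"
  shows "sum_mset A \<le> sum_list (take (size A) L)"
  using assms
proof (induction L arbitrary: A)
  case Nil
  then show ?case by simp
next
  case (Cons a L)
  show ?case
  proof (cases "A = {#}")
    case True
    then show ?thesis by simp
  next
    case False
    obtain z where zA: "z \<in># A" and z_a: "a \<in># A \<Longrightarrow> z = a"
      using False by (metis multiset_nonemptyE)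
    have "z \<in> set (a # L)" using zA Cons.prems(2) by (metis mset_subset_eqD set_mset_mset)
    then have za: "z \<le> a" using Cons.prems(1) by auto
    have "A - {#z#} \<subseteq># mset L"
    proof (cases "a \<in># A")
      case True
      then show ?thesis using Cons.prems(2) z_a by (simp add: subset_eq_diff_conv add.commute)
    next
      case False
      then have "A \<subseteq># mset L" using Cons.prems(2)
        by (metis mset.simps(2) Diff_eq_empty_iff_mset minus_add_mset_if_not_in_lhs)
      then show ?thesis by (meson diff_subset_eq_self subset_mset.order_trans)
    qed
    then have "sum_mset (A - {#z#}) \<le> sum_list (take (size (A - {#z#})) L)"
      using Cons.IH Cons.prems(1) by simp
    moreover have "sum_mset A = z + sum_mset (A - {#z#})" using sum_mset.remove[OF zA] by simp
    moreover have "size A = Suc (size (A - {#z#}))"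
      using size_Diff1_less[OF zA] size_Diff_singleton[OF zA] by simp
    ultimately show ?thesis using za by simp
  qed
qed

lemma sum_take_le_sum_mset:
  fixes L :: "real list"
  assumes "sorted L" and "A \<subseteq># mset L"
  shows "sum_list (take (size A) L) \<le> sum_mset A"
proof -
  have "sorted_wrt (\<ge>) (map uminus L)"
    using assms(1) by (simp add: sorted_wrt_map sorted_wrt_iff_nth_less)
  moreover have "image_mset uminus A \<subseteq># mset (map uminus L)"
    using assms(2) by (simp add: image_mset_subseteq_mono)
  ultimately have "sum_mset (image_mset uminus A) \<le> sum_list (take (size A) (map uminus L))"
    using sum_mset_le_sum_take by fastforce
  moreover have "sum_mset (image_mset uminus A) = - sum_mset A" by (induction A) auto
  moreover have "sum_list (take k (map uminus L)) = - sum_list (take k L)" for k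
    by (induction L arbitrary: k) (auto simp: take_Cons')
  ultimately show ?thesis by simp
qed

section \<open>First best and Seller Trade Reduction\<close>

lemma fb_count_eq_Max:
  "fb_count bs ss = Max (insert 0 {i. 1 \<le> i \<and> i \<le> min (length bs) (length ss) \<and>
     sort ss ! (i - 1) \<le> rev (sort bs) ! (i - 1)})"
  by (simp add: fb_count_def)

lemma finite_fb_candidates:
  "finite (insert 0 {i. 1 \<le> i \<and> i \<le> min (length bs) (length ss) \<and> P i})"
  by (rule finite_subset[of _ "{..min (length bs) (length ss)}"]) auto

lemma fb_count_in_candidates:
  "fb_count bs ss \<in> insert 0 {i. 1 \<le> i \<and> i \<le> min (length bs) (length ss) \<and>
     sort ss ! (i - 1) \<le> rev (sort bs) ! (i - 1)}"
  unfolding fb_count_eq_Max by (rule Max_in[OF finite_fb_candidates]) simp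

lemma fb_count_le_length: "fb_count bs ss \<le> length bs" "fb_count bs ss \<le> length ss"
  using fb_count_in_candidates[of bs ss] by auto

lemma fb_count_trade:
  assumes "0 < fb_count bs ss"
  shows "sort ss ! (fb_count bs ss - 1) \<le> rev (sort bs) ! (fb_count bs ss - 1)"
  using assms fb_count_in_candidates[of bs ss] by auto

lemma le_fb_count:
  fixes bs ss :: "real list"
  assumes "k \<le> length (filter (\<lambda>v. t \<le> v) bs)" and "k \<le> length (filter (\<lambda>v. v \<le> t) ss)"
  shows "k \<le> fb_count bs ss"
proof (cases "k = 0")
  case False
  have len: "k \<le> length bs" "k \<le> length ss"
    using assms length_filter_le order_trans by blast+
  have "sort ss ! (k - 1) \<le> t" using False assms(2) by (intro sort_nth_le) simp
  also have "t \<le> rev (sort bs) ! (k - 1)" using False assms(1) by (intro le_rev_sort_nth) simp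
  finally show ?thesis
    unfolding fb_count_eq_Max using False len by (intro Max_ge[OF finite_fb_candidates]) auto
qed simp

lemma fb_count_threshold:
  fixes bs ss :: "real list"
  obtains t where "fb_count bs ss \<le> length (filter (\<lambda>v. t \<le> v) bs)"
    and "fb_count bs ss \<le> length (filter (\<lambda>v. v \<le> t) ss)"
proof (cases "fb_count bs ss = 0")
  case False
  define r where "r = fb_count bs ss"
  define t where "t = rev (sort bs) ! (r - 1)"
  have r: "0 < r" "r \<le> length bs" "r \<le> length ss"
    using False fb_count_le_length unfolding r_def by auto
  have "\<forall>v \<in> set (take r (rev (sort bs))). t \<le> v"
    using r by (auto simp: t_def in_set_conv_nth rev_nth sorted_nth_mono)
  then have "r \<le> length (filter (\<lambda>v. t \<le> v) bs)"
    using le_length_filter_take[of r "rev (sort bs)"] r by (simp add: length_filter_rev_sort)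
  moreover have "\<forall>v \<in> set (take r (sort ss)). v \<le> t"
  proof
    fix v assume "v \<in> set (take r (sort ss))"
    then have "v \<le> sort ss ! (r - 1)" using r by (auto simp: in_set_conv_nth sorted_nth_mono)
    also have "\<dots> \<le> t" using fb_count_trade r unfolding r_def t_def by simp
    finally show "v \<le> t" .
  qed
  then have "r \<le> length (filter (\<lambda>v. v \<le> t) ss)"
    using le_length_filter_take[of r "sort ss"] r by (simp add: filter_sort)
  ultimately show ?thesis using that unfolding r_def by blast
qed (use that in simp)

lemma sort_nth_le_rev_sort_nth:
  assumes "i < fb_count bs ss"
  shows "sort ss ! i \<le> rev (sort bs) ! i"
proof -
  let ?r = "fb_count bs ss"
  have r: "?r \<le> length bs" "?r \<le> length ss" by (fact fb_count_le_length)+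
  have "sort ss ! i \<le> sort ss ! (?r - 1)" using r assms by (intro sorted_nth_mono) auto
  also have "\<dots> \<le> rev (sort bs) ! (?r - 1)" using assms by (intro fb_count_trade) auto
  also have "\<dots> \<le> rev (sort bs) ! i" using r assms by (simp add: rev_nth sorted_nth_mono)
  finally show ?thesis .
qed

lemma gains_mono:
  assumes "k \<le> k'" and "k' \<le> fb_count bs ss"
  shows "gains bs ss k \<le> gains bs ss k'"
  unfolding gains_def Let_def
  using assms by (intro sum_mono2) (auto intro!: sort_nth_le_rev_sort_nth)

lemma gains_le_str_gains:
  assumes "k < fb_count bs ss"
  shows "gains bs ss k \<le> str_gains bs ss"
proof -
  have "gains bs ss k \<le> gains bs ss (fb_count bs ss - 1)"
    and "gains bs ss (fb_count bs ss - 1) \<le> gains bs ss (fb_count bs ss)"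
    using assms by (auto intro: gains_mono)
  then show ?thesis using assms unfolding str_gains_def Let_def by auto
qed

lemma gains_eq_sum_take:
  assumes "k \<le> length bs" and "k \<le> length ss"
  shows "gains bs ss k = sum_list (take k (rev (sort bs))) - sum_list (take k (sort ss))"
  using assms by (simp add: gains_def sum_list_sum_nth lessThan_atLeast0 min_absorb1 sum_subtractf)

lemma gains_Suc_ge:
  assumes bs': "mset bs + {#x#} \<subseteq># mset bs'" and ss': "mset ss + {#y#} \<subseteq># mset ss'"
    and "k \<le> length bs" and "k \<le> length ss"
  shows "gains bs ss k + (x - y) \<le> gains bs' ss' (Suc k)"
proof -
  have take_sub: "mset (take k zs) \<subseteq># mset zs" for zs :: "real list"
    by (metis append_take_drop_id mset_append mset_subset_eq_add_left)
  define A where "A = mset (take k (rev (sort bs))) + {#x#}"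
  define C where "C = mset (take k (sort ss)) + {#y#}"
  have "A \<subseteq># mset bs + {#x#}"
    unfolding A_def using take_sub[of "rev (sort bs)"] by simp
  then have "sum_mset A \<le> sum_list (take (size A) (rev (sort bs')))"
    using bs' by (intro sum_mset_le_sum_take) (auto simp: sorted_wrt_rev)
  moreover have "C \<subseteq># mset ss + {#y#}"
    unfolding C_def using take_sub[of "sort ss"] by simp
  then have "sum_list (take (size C) (sort ss')) \<le> sum_mset C"
    using ss' by (intro sum_take_le_sum_mset) auto
  moreover have "Suc k \<le> length bs'" "Suc k \<le> length ss'"
    using assms size_mset_mono[OF bs'] size_mset_mono[OF ss'] by auto
  ultimately show ?thesis
    using assms by (simp add: A_def C_def gains_eq_sum_take sum_mset_sum_list)
qed

lemma first_best_add_le_str_gains: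
  assumes "fb_count bs ss + 2 \<le> fb_count bs' ss'"
    and "mset bs + {#x#} \<subseteq># mset bs'" and "mset ss + {#y#} \<subseteq># mset ss'"
  shows "first_best bs ss + (x - y) \<le> str_gains bs' ss'"
proof -
  have "first_best bs ss + (x - y) \<le> gains bs' ss' (Suc (fb_count bs ss))"
    unfolding first_best_def using assms fb_count_le_length by (intro gains_Suc_ge) auto
  also have "\<dots> \<le> str_gains bs' ss'" using assms(1) by (intro gains_le_str_gains) auto
  finally show ?thesis .
qed

section \<open>Adding two new traders\<close>

lemma mset_vals: "mset (vals v q A) = image_mset (\<lambda>i. v (q i)) (mset_set A)"
  by (simp add: vals_def) (metis mset_sorted_list_of_multiset sorted_list_of_mset_set)

lemma length_filter_vals:
  assumes "finite A"
  shows "length (filter P (vals v q A)) = card {i \<in> A. P (v (q i))}"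
proof -
  have "length (filter P (vals v q A)) = length (filter (\<lambda>i. P (v (q i))) (sorted_list_of_set A))"
    by (simp add: vals_def filter_map comp_def)
  also have "\<dots> = card {i \<in> A. P (v (q i))}"
    using assms by (simp add: distinct_card[symmetric] Collect_conj_eq Int_commute)
  finally show ?thesis .
qed

lemma mset_vals_add_subseteq:
  assumes "finite B" and "A \<subseteq> B" and "i \<in> B - A"
  shows "mset (vals v q A) + {#v (q i)#} \<subseteq># mset (vals v q B)"
proof -
  have "finite A" using assms finite_subset by blast
  then have "mset_set A + {#i#} = mset_set (insert i A)" using assms by simp
  also have "\<dots> \<subseteq># mset_set B" using assms \<open>finite A\<close> by (subst msubset_mset_set_iff) auto
  finally show ?thesis unfolding mset_vals by (metis image_mset_add_mset add_mset_add_single image_mset_subseteq_mono)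
qed

lemma card_le_card_filter_add:
  assumes "finite A" and "finite I" and "\<And>k. k \<in> A \<Longrightarrow> \<not> Q k \<Longrightarrow> k \<in> I"
  shows "card A \<le> card {k \<in> A. Q k} + card I"
proof -
  have "A = {k \<in> A. Q k} \<union> {k \<in> A. \<not> Q k}" by auto
  then have "card A \<le> card {k \<in> A. Q k} + card {k \<in> A. \<not> Q k}" by (metis card_Un_le)
  moreover have "card {k \<in> A. \<not> Q k} \<le> card I" using assms by (intro card_mono) auto
  ultimately show ?thesis by linarith
qed

lemma card_filter_Un_disjoint:
  assumes "finite A" and "finite B" and "A \<inter> B = {}"
  shows "card {k \<in> A \<union> B. P k} = card {k \<in> A. P k} + card {k \<in> B. P k}"
proof -
  have "{k \<in> A \<union> B. P k} = {k \<in> A. P k} \<union> {k \<in> B. P k}" by auto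
  then show ?thesis using assms by (simp add: card_Un_disjoint disjoint_iff)
qed

lemma old_sellers_below_new_buyer:
  fixes b s :: "real \<Rightarrow> real" and q :: "nat \<Rightarrow> real"
  assumes anti_b: "antimono_on {1..N} (\<lambda>k. b (q k))" and anti_s: "antimono_on {1..N} (\<lambda>k. s (q k))"
    and dom: "\<forall>k \<in> {1..N}. s (q k) \<le> b (q k)"
    and "Bold \<subseteq> {1..N}" and "Sold \<subseteq> {1..N}" and "i \<in> {1..N}" and "2 * (i - 1) \<le> card Sold"
    and r: "r \<le> card {k \<in> Bold. t \<le> b (q k)}" and "b (q i) < t"
  shows "r \<le> card {k \<in> Sold. s (q k) \<le> b (q i)}"
proof -
  have "{k \<in> Bold. t \<le> b (q k)} \<subseteq> {1..<i}"
  proof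
    fix k assume k: "k \<in> {k \<in> Bold. t \<le> b (q k)}"
    have "\<not> i \<le> k"
    proof
      assume "i \<le> k"
      moreover have "k \<in> {1..N}" using assms k by auto
      ultimately have "b (q k) \<le> b (q i)" using assms by (simp add: monotone_onD[OF anti_b])
      then show False using assms k by auto
    qed
    then show "k \<in> {1..<i}" using assms k by auto
  qed
  then have "r \<le> i - 1" using r by (metis card_atLeastLessThan card_mono finite_atLeastLessThan order_trans)
  moreover have "card Sold \<le> card {k \<in> Sold. s (q k) \<le> b (q i)} + card {1..<i}"
  proof (rule card_le_card_filter_add)
    fix k assume k: "k \<in> Sold" "\<not> s (q k) \<le> b (q i)"
    have "\<not> i \<le> k"
    proof
      assume "i \<le> k"
      moreover have "k \<in> {1..N}" using assms k by auto
      ultimately have "s (q k) \<le> s (q i)" using assms by (simp add: monotone_onD[OF anti_s])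
      then show False using dom assms k by fastforce
    qed
    then show "k \<in> {1..<i}" using assms k by auto
  qed (simp_all add: rev_finite_subset[OF finite_atLeastAtMost assms(5)])
  ultimately show ?thesis using assms by simp
qed

lemma old_buyers_above_new_seller:
  fixes b s :: "real \<Rightarrow> real" and q :: "nat \<Rightarrow> real"
  assumes anti_b: "antimono_on {1..N} (\<lambda>k. b (q k))" and anti_s: "antimono_on {1..N} (\<lambda>k. s (q k))"
    and dom: "\<forall>k \<in> {1..N}. s (q k) \<le> b (q k)"
    and "Bold \<subseteq> {1..N}" and "Sold \<subseteq> {1..N}" and "j \<in> {1..N}" and "2 * (N - j) \<le> card Bold"
    and r: "r \<le> card {k \<in> Sold. s (q k) \<le> t}" and "t < s (q j)"
  shows "r \<le> card {k \<in> Bold. s (q j) \<le> b (q k)}"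
proof -
  have "{k \<in> Sold. s (q k) \<le> t} \<subseteq> {j<..N}"
  proof
    fix k assume k: "k \<in> {k \<in> Sold. s (q k) \<le> t}"
    have "\<not> k \<le> j"
    proof
      assume "k \<le> j"
      moreover have "k \<in> {1..N}" using assms k by auto
      ultimately have "s (q j) \<le> s (q k)" using assms by (simp add: monotone_onD[OF anti_s])
      then show False using assms k by auto
    qed
    then show "k \<in> {j<..N}" using assms k by auto
  qed
  then have "r \<le> N - j" using r by (metis card_greaterThanAtMost card_mono finite_greaterThanAtMost order_trans)
  moreover have "card Bold \<le> card {k \<in> Bold. s (q j) \<le> b (q k)} + card {j<..N}"
  proof (rule card_le_card_filter_add)
    fix k assume k: "k \<in> Bold" "\<not> s (q j) \<le> b (q k)"
    have "\<not> k \<le> j"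
    proof
      assume "k \<le> j"
      moreover have "k \<in> {1..N}" using assms k by auto
      ultimately have "b (q j) \<le> b (q k)" using assms by (simp add: monotone_onD[OF anti_b])
      then show False using dom assms k by fastforce
    qed
    then show "k \<in> {j<..N}" using assms k by auto
  qed (simp_all add: rev_finite_subset[OF finite_atLeastAtMost assms(4)])
  ultimately show ?thesis using assms by simp
qed

lemma antimono_on_Max_Min:
  fixes f :: "'a::linorder \<Rightarrow> 'b::order"
  assumes anti: "antimono_on S f" and "A \<subseteq> S" and "finite A" and "k \<in> A"
  shows "f (Max A) \<le> f k" and "f k \<le> f (Min A)"
proof -
  have "Max A \<in> A" "Min A \<in> A" using assms by (auto intro: Max_in Min_in)
  moreover have "k \<le> Max A" "Min A \<le> k" using assms by simp_all
  ultimately show "f (Max A) \<le> f k" "f k \<le> f (Min A)"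
    using monotone_onD[OF anti] assms by blast+
qed

lemma threshold_between_new_traders:
  fixes b s :: "real \<Rightarrow> real" and q :: "nat \<Rightarrow> real"
  assumes anti_b: "antimono_on {1..N} (\<lambda>k. b (q k))" and anti_s: "antimono_on {1..N} (\<lambda>k. s (q k))"
    and dom: "\<forall>k \<in> {1..N}. s (q k) \<le> b (q k)"
    and sub: "Bold \<subseteq> {1..N}" "Sold \<subseteq> {1..N}"
    and i: "i \<in> {1..N}" and j: "j \<in> {1..N}" and "s (q j) \<le> b (q i)"
    and card_b: "2 * (N - j) \<le> card Bold" and card_s: "2 * (i - 1) \<le> card Sold"
    and t0: "r \<le> card {k \<in> Bold. t0 \<le> b (q k)}" "r \<le> card {k \<in> Sold. s (q k) \<le> t0}"
  obtains t where "s (q j) \<le> t" and "t \<le> b (q i)"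
    and "r \<le> card {k \<in> Bold. t \<le> b (q k)}" and "r \<le> card {k \<in> Sold. s (q k) \<le> t}"
proof
  define t where "t = max (s (q j)) (min t0 (b (q i)))"
  have fin: "finite Bold" "finite Sold"
    using rev_finite_subset[OF finite_atLeastAtMost sub(1)] rev_finite_subset[OF finite_atLeastAtMost sub(2)] .
  show "s (q j) \<le> t" "t \<le> b (q i)" using \<open>s (q j) \<le> b (q i)\<close> unfolding t_def by auto
  show "r \<le> card {k \<in> Bold. t \<le> b (q k)}"
  proof (cases "t \<le> t0")
    case True
    then have "card {k \<in> Bold. t0 \<le> b (q k)} \<le> card {k \<in> Bold. t \<le> b (q k)}"
      using fin by (intro card_mono) auto
    with t0 show ?thesis by linarith
  next
    case False
    then have "t = s (q j)" "t0 < s (q j)" unfolding t_def by auto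
    then show ?thesis using old_buyers_above_new_seller[OF anti_b anti_s dom sub j card_b t0(2)] by simp
  qed
  show "r \<le> card {k \<in> Sold. s (q k) \<le> t}"
  proof (cases "t0 \<le> t")
    case True
    then have "card {k \<in> Sold. s (q k) \<le> t0} \<le> card {k \<in> Sold. s (q k) \<le> t}"
      using fin by (intro card_mono) auto
    with t0 show ?thesis by linarith
  next
    case False
    then have "t = b (q i)" "b (q i) < t0" using \<open>s (q j) \<le> b (q i)\<close> unfolding t_def by auto
    then show ?thesis using old_sellers_below_new_buyer[OF anti_b anti_s dom sub i card_s t0(1)] by simp
  qed
qed

lemma fb_count_add_two_new_traders:
  fixes b s :: "real \<Rightarrow> real" and q :: "nat \<Rightarrow> real"
  assumes anti_b: "antimono_on {1..N} (\<lambda>k. b (q k))" and anti_s: "antimono_on {1..N} (\<lambda>k. s (q k))"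
    and dom: "\<forall>k \<in> {1..N}. s (q k) \<le> b (q k)"
    and sub: "Bold \<union> Bnew \<subseteq> {1..N}" "Sold \<union> Snew \<subseteq> {1..N}"
    and disj: "Bold \<inter> Bnew = {}" "Sold \<inter> Snew = {}"
    and "2 * p \<le> N" and "2 * (p - 1) \<le> card Bold" and "2 * (p - 1) \<le> card Sold"
    and new_b: "2 \<le> card ({1..p} \<inter> Bnew)" and new_s: "2 \<le> card ({N-p+1..N} \<inter> Snew)"
  shows "fb_count (vals b q Bold) (vals s q Sold) + 2
       \<le> fb_count (vals b q (Bold \<union> Bnew)) (vals s q (Sold \<union> Snew))"
proof -
  have fin: "finite Bold" "finite Bnew" "finite Sold" "finite Snew"
    using rev_finite_subset[OF finite_atLeastAtMost sub(1)] rev_finite_subset[OF finite_atLeastAtMost sub(2)]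
    by simp_all
  define r where "r = fb_count (vals b q Bold) (vals s q Sold)"
  obtain t0 where "r \<le> length (filter (\<lambda>v. t0 \<le> v) (vals b q Bold))"
    and "r \<le> length (filter (\<lambda>v. v \<le> t0) (vals s q Sold))"
    unfolding r_def by (rule fb_count_threshold)
  then have t0: "r \<le> card {k \<in> Bold. t0 \<le> b (q k)}" "r \<le> card {k \<in> Sold. s (q k) \<le> t0}"
    using fin by (simp_all add: length_filter_vals)
  define IB JS where "IB = {1..p} \<inter> Bnew" and "JS = {N-p+1..N} \<inter> Snew"
  have "IB \<noteq> {}" "JS \<noteq> {}" using new_b new_s unfolding IB_def JS_def by auto
  moreover have IB: "finite IB" "IB \<subseteq> {1..N}" and JS: "finite JS" "JS \<subseteq> {1..N}"
    using sub unfolding IB_def JS_def by auto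
  ultimately have "Max IB \<in> {1..p}" "Min JS \<in> {N-p+1..N}"
    using Max_in[OF IB(1)] Min_in[OF JS(1)] unfolding IB_def JS_def by auto
  define i j where "i = Max IB" and "j = Min JS"
  have ij: "i \<in> {1..p}" "j \<in> {N-p+1..N}" unfolding i_def j_def by fact+
  have "s (q j) \<le> s (q i)" using ij \<open>2 * p \<le> N\<close> by (intro monotone_onD[OF anti_s]) auto
  also have "\<dots> \<le> b (q i)" using ij \<open>2 * p \<le> N\<close> dom by auto
  finally have yx: "s (q j) \<le> b (q i)" .
  have "Bold \<subseteq> {1..N}" "Sold \<subseteq> {1..N}" "i \<in> {1..N}" "j \<in> {1..N}"
    "2 * (N - j) \<le> card Bold" "2 * (i - 1) \<le> card Sold"
    using sub ij \<open>2 * p \<le> N\<close> \<open>2 * (p - 1) \<le> card Bold\<close> \<open>2 * (p - 1) \<le> card Sold\<close> by auto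
  then obtain t where t: "s (q j) \<le> t" "t \<le> b (q i)"
    and old: "r \<le> card {k \<in> Bold. t \<le> b (q k)}" "r \<le> card {k \<in> Sold. s (q k) \<le> t}"
    using threshold_between_new_traders[OF anti_b anti_s dom _ _ _ _ yx _ _ t0] by blast
  have "IB \<subseteq> {k \<in> Bnew. t \<le> b (q k)}"
    using antimono_on_Max_Min(1)[OF anti_b IB(2,1)] t unfolding i_def IB_def by fastforce
  then have "card IB \<le> card {k \<in> Bnew. t \<le> b (q k)}" using fin by (intro card_mono) auto
  moreover have "JS \<subseteq> {k \<in> Snew. s (q k) \<le> t}"
    using antimono_on_Max_Min(2)[OF anti_s JS(2,1)] t unfolding j_def JS_def by fastforce
  then have "card JS \<le> card {k \<in> Snew. s (q k) \<le> t}" using fin by (intro card_mono) auto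
  ultimately show ?thesis
    using fin old new_b new_s card_filter_Un_disjoint[OF fin(1,2) disj(1)] card_filter_Un_disjoint[OF fin(3,4) disj(2)]
    unfolding r_def[symmetric] IB_def[symmetric] JS_def[symmetric]
    by (intro le_fb_count[where t = t]) (simp_all add: length_filter_vals)
qed

section \<open>The event E1\<close>

lemma pblk_ge_2: "20 \<le> n \<Longrightarrow> 2 \<le> pblk n"
  unfolding pblk_def by linarith

lemma double_pblk_le: "20 \<le> n \<Longrightarrow> 2 * pblk n \<le> n"
  unfolding pblk_def by linarith

lemma card_agents_assignment:
  assumes "\<pi> \<in> assignments n m c"
  shows "card (agents (m+n+2*c) \<pi> {BO}) = m" "card (agents (m+n+2*c) \<pi> {SO}) = n"
  using assms unfolding assignments_def agents_def by auto

lemma event_E1_subset_assignments: "event_E1 n m c \<subseteq> assignments n m c"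
  unfolding event_E1_def Let_def by auto

lemma pair_gain_le_STR_minus_OPT:
  fixes b s :: "real \<Rightarrow> real" and q :: "nat \<Rightarrow> real" and n m c :: nat
  defines "N \<equiv> m + n + 2*c" and "p \<equiv> pblk n"
  assumes anti_b: "antimono_on {1..N} (\<lambda>k. b (q k))" and anti_s: "antimono_on {1..N} (\<lambda>k. s (q k))"
    and dom: "\<forall>k \<in> {1..N}. s (q k) \<le> b (q k)"
    and "20 \<le> n" and "n \<le> m" and E1: "\<pi> \<in> event_E1 n m c"
    and i: "i \<in> {1..p}" "\<pi> i = BN" and j: "j \<in> {N-p+1..N}" "\<pi> j = SN"
  shows "b (q i) - s (q j) \<le> STR_gft b s N q \<pi> - OPT_gft b s N q \<pi>"
proof -
  define Bold Bnew Sold Snew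
    where "Bold = agents N \<pi> {BO}" and "Bnew = agents N \<pi> {BN}"
      and "Sold = agents N \<pi> {SO}" and "Snew = agents N \<pi> {SN}"
  have sub: "Bold \<union> Bnew \<subseteq> {1..N}" "Sold \<union> Snew \<subseteq> {1..N}"
    unfolding Bold_def Bnew_def Sold_def Snew_def agents_def by auto
  have "\<pi> \<in> assignments n m c" using E1 event_E1_subset_assignments by blast
  then have card: "card Bold = m" "card Sold = n"
    unfolding Bold_def Sold_def N_def by (fact card_agents_assignment)+
  have p: "2 * p \<le> n" using \<open>20 \<le> n\<close> unfolding p_def by (fact double_pblk_le)
  have "i \<in> Bnew - Bold" and "j \<in> Snew - Sold"
    using i j p unfolding Bold_def Bnew_def Sold_def Snew_def agents_def N_def by auto
  moreover have "finite (Bold \<union> Bnew)" "finite (Sold \<union> Snew)"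
    using rev_finite_subset[OF finite_atLeastAtMost sub(1)] rev_finite_subset[OF finite_atLeastAtMost sub(2)] .
  ultimately have "mset (vals b q Bold) + {#b (q i)#} \<subseteq># mset (vals b q (Bold \<union> Bnew))"
    and "mset (vals s q Sold) + {#s (q j)#} \<subseteq># mset (vals s q (Sold \<union> Snew))"
    by (intro mset_vals_add_subseteq; auto)+
  moreover have "fb_count (vals b q Bold) (vals s q Sold) + 2
      \<le> fb_count (vals b q (Bold \<union> Bnew)) (vals s q (Sold \<union> Snew))"
  proof (rule fb_count_add_two_new_traders[OF anti_b anti_s dom sub])
    show "Bold \<inter> Bnew = {}" "Sold \<inter> Snew = {}"
      unfolding Bold_def Bnew_def Sold_def Snew_def agents_def by auto
    show "2 * p \<le> N" "2 * (p - 1) \<le> card Bold" "2 * (p - 1) \<le> card Sold"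
      using p card \<open>n \<le> m\<close> unfolding N_def by auto
    show "2 \<le> card ({1..p} \<inter> Bnew)" "2 \<le> card ({N-p+1..N} \<inter> Snew)"
      using E1 unfolding event_E1_def Let_def Bnew_def Snew_def N_def p_def by auto
  qed
  ultimately have "first_best (vals b q Bold) (vals s q Sold) + (b (q i) - s (q j))
      \<le> str_gains (vals b q (Bold \<union> Bnew)) (vals s q (Sold \<union> Snew))"
    by (rule first_best_add_le_str_gains[rotated])
  moreover have "agents N \<pi> {BO, BN} = Bold \<union> Bnew" "agents N \<pi> {SO, SN} = Sold \<union> Snew"
    unfolding Bold_def Bnew_def Sold_def Snew_def agents_def by auto
  ultimately show ?thesis unfolding OPT_gft_def STR_gft_def Bold_def Sold_def by simp
qed

lemma event_E1_new_traders:
  fixes n m c :: nat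
  defines "N \<equiv> m + n + 2*c" and "p \<equiv> pblk n"
  assumes "\<pi> \<in> event_E1 n m c"
  shows "\<exists>i \<in> {1..p}. \<pi> i = BN" and "\<exists>j \<in> {N-p+1..N}. \<pi> j = SN"
proof -
  have "2 \<le> card ({1..p} \<inter> agents N \<pi> {BN})" "2 \<le> card ({N-p+1..N} \<inter> agents N \<pi> {SN})"
    using assms unfolding event_E1_def Let_def by auto
  then have "{1..p} \<inter> agents N \<pi> {BN} \<noteq> {}" "{N-p+1..N} \<inter> agents N \<pi> {SN} \<noteq> {}"
    by auto
  then show "\<exists>i \<in> {1..p}. \<pi> i = BN" "\<exists>j \<in> {N-p+1..N}. \<pi> j = SN"
    unfolding agents_def by auto
qed

lemma OPT_le_STR_on_event_E1:
  fixes b s :: "real \<Rightarrow> real" and q :: "nat \<Rightarrow> real" and n m c :: nat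
  defines "N \<equiv> m + n + 2*c"
  assumes anti_b: "antimono_on {1..N} (\<lambda>k. b (q k))" and anti_s: "antimono_on {1..N} (\<lambda>k. s (q k))"
    and dom: "\<forall>k \<in> {1..N}. s (q k) \<le> b (q k)"
    and "20 \<le> n" and "n \<le> m" and E1: "\<pi> \<in> event_E1 n m c"
  shows "OPT_gft b s N q \<pi> \<le> STR_gft b s N q \<pi>"
proof -
  obtain i j where i: "i \<in> {1..pblk n}" "\<pi> i = BN" and j: "j \<in> {N-pblk n+1..N}" "\<pi> j = SN"
    using event_E1_new_traders[OF E1] unfolding N_def by blast
  have "2 * pblk n \<le> n" using \<open>20 \<le> n\<close> by (rule double_pblk_le)
  then have "s (q j) \<le> s (q i)" using i j by (intro monotone_onD[OF anti_s]) (auto simp: N_def)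
  also have "\<dots> \<le> b (q i)" using dom i \<open>2 * pblk n \<le> n\<close> unfolding N_def by auto
  also have "b (q i) - s (q j) \<le> STR_gft b s N q \<pi> - OPT_gft b s N q \<pi>"
    using pair_gain_le_STR_minus_OPT[OF anti_b[unfolded N_def] anti_s[unfolded N_def] dom[unfolded N_def]
        \<open>20 \<le> n\<close> \<open>n \<le> m\<close> E1 i j[unfolded N_def]] unfolding N_def .
  finally show ?thesis by linarith
qed

section \<open>Invariance under transpositions\<close>

lemma card_filter_transpose:
  assumes "a \<in> Y \<longleftrightarrow> a' \<in> Y"
  shows "card {k \<in> Y. P (Transposition.transpose a a' k)} = card {k \<in> Y. P k}"
proof -
  have "Transposition.transpose a a' k \<in> Y" if "k \<in> Y" for k
    using transpose_image_eq[OF assms] that by blast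
  then have "bij_betw (Transposition.transpose a a') {k \<in> Y. P (Transposition.transpose a a' k)} {k \<in> Y. P k}"
    by (intro bij_betw_byWitness[where f' = "Transposition.transpose a a'"]) auto
  then show ?thesis by (rule bij_betw_same_card)
qed

lemma transpose_invariant_label_weight:
  fixes E :: "('a \<Rightarrow> 'r) set" and X :: "'a set"
  assumes "finite E" and "finite X"
    and closed: "\<And>\<pi> a a'. \<pi> \<in> E \<Longrightarrow> a \<in> X \<Longrightarrow> a' \<in> X \<Longrightarrow> \<pi> \<circ> Transposition.transpose a a' \<in> E"
    and labelled: "\<And>\<pi>. \<pi> \<in> E \<Longrightarrow> \<exists>x \<in> X. \<pi> x = R"
    and "a \<in> X"
  shows "(\<Sum>\<pi>\<in>E. if \<pi> a = R then 1 / card {x \<in> X. \<pi> x = R} else 0) = card E / card X"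
proof -
  define W where "W a = (\<Sum>\<pi>\<in>E. if \<pi> a = R then 1 / real (card {x \<in> X. \<pi> x = R}) else 0)" for a
  have W_eq: "W a1 = W a2" if "a1 \<in> X" "a2 \<in> X" for a1 a2
  proof -
    define \<tau> where "\<tau> = Transposition.transpose a1 a2"
    have card_eq: "card {x \<in> X. (\<pi> \<circ> \<tau>) x = R} = card {x \<in> X. \<pi> x = R}" for \<pi>
      unfolding \<tau>_def using that card_filter_transpose[of a1 X a2 "\<lambda>k. \<pi> k = R"] by simp
    have "W a1 = (\<Sum>\<pi>\<in>E. if (\<pi> \<circ> \<tau>) a1 = R then 1 / real (card {x \<in> X. (\<pi> \<circ> \<tau>) x = R}) else 0)"
      unfolding W_def
      by (rule sum.reindex_bij_witness[of _ "\<lambda>\<pi>. \<pi> \<circ> \<tau>" "\<lambda>\<pi>. \<pi> \<circ> \<tau>"])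
        (use closed that in \<open>auto simp: \<tau>_def fun_eq_iff\<close>)
    also have "\<dots> = W a2" unfolding W_def card_eq by (simp add: \<tau>_def)
    finally show ?thesis .
  qed
  have "(\<Sum>a\<in>X. W a) = (\<Sum>\<pi>\<in>E. \<Sum>a\<in>X. if \<pi> a = R then 1 / real (card {x \<in> X. \<pi> x = R}) else 0)"
    unfolding W_def by (rule sum.swap)
  also have "\<dots> = (\<Sum>\<pi>\<in>E. 1)"
  proof (rule sum.cong[OF refl])
    fix \<pi> assume "\<pi> \<in> E"
    then have "{x \<in> X. \<pi> x = R} \<noteq> {}" using labelled by blast
    then have "card {x \<in> X. \<pi> x = R} \<noteq> 0" using \<open>finite X\<close> by simp
    then show "(\<Sum>a\<in>X. if \<pi> a = R then 1 / real (card {x \<in> X. \<pi> x = R}) else 0) = 1"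
      using \<open>finite X\<close> by (simp add: sum.If_cases Int_def)
  qed
  finally have "(\<Sum>a\<in>X. W a) = card E" by simp
  moreover have "(\<Sum>a'\<in>X. W a') = card X * W a" using W_eq[OF _ \<open>a \<in> X\<close>] by simp
  moreover have "card X \<noteq> 0" using \<open>finite X\<close> \<open>a \<in> X\<close> by auto
  ultimately show ?thesis unfolding W_def by (simp add: field_simps)
qed

lemma transpose_invariant_sum_label_mean:
  fixes E :: "('a \<Rightarrow> 'r) set" and X :: "'a set" and f :: "'a \<Rightarrow> real"
  assumes "finite E" and "finite X"
    and closed: "\<And>\<pi> a a'. \<pi> \<in> E \<Longrightarrow> a \<in> X \<Longrightarrow> a' \<in> X \<Longrightarrow> \<pi> \<circ> Transposition.transpose a a' \<in> E"
    and labelled: "\<And>\<pi>. \<pi> \<in> E \<Longrightarrow> \<exists>x \<in> X. \<pi> x = R"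
  shows "(\<Sum>\<pi>\<in>E. (\<Sum>a\<in>{x \<in> X. \<pi> x = R}. f a) / card {x \<in> X. \<pi> x = R})
       = card E / card X * (\<Sum>a\<in>X. f a)"
proof -
  have mean_eq: "(\<Sum>a\<in>{x \<in> X. \<pi> x = R}. f a) / c = (\<Sum>a\<in>X. f a * (if \<pi> a = R then 1 / c else 0))"
    for \<pi> :: "'a \<Rightarrow> 'r" and c :: real
  proof -
    have "(\<Sum>a\<in>{x \<in> X. \<pi> x = R}. f a) / c = (\<Sum>a\<in>{x \<in> X. \<pi> x = R}. f a * (1 / c))"
      by (simp add: sum_divide_distrib)
    also have "\<dots> = (\<Sum>a\<in>X. if \<pi> a = R then f a * (1 / c) else 0)"
      using \<open>finite X\<close> by (rule sum.inter_filter)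
    finally show ?thesis by (simp add: if_distrib[of "(*) _"] cong: if_cong)
  qed
  have "(\<Sum>\<pi>\<in>E. (\<Sum>a\<in>{x \<in> X. \<pi> x = R}. f a) / card {x \<in> X. \<pi> x = R})
      = (\<Sum>\<pi>\<in>E. \<Sum>a\<in>X. f a * (if \<pi> a = R then 1 / card {x \<in> X. \<pi> x = R} else 0))"
    by (simp only: mean_eq)
  also have "\<dots> = (\<Sum>a\<in>X. f a * (\<Sum>\<pi>\<in>E. if \<pi> a = R then 1 / card {x \<in> X. \<pi> x = R} else 0))"
    by (subst sum.swap) (simp add: sum_distrib_left)
  also have "\<dots> = (\<Sum>a\<in>X. f a * (card E / card X))"
    using transpose_invariant_label_weight[OF assms] by simp
  also have "\<dots> = (\<Sum>a\<in>X. f a) * (card E / card X)"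
    by (rule sum_distrib_right[symmetric])
  also have "\<dots> = card E / card X * (\<Sum>a\<in>X. f a)"
    by (rule mult.commute)
  finally show ?thesis .
qed

lemma finite_assignments: "finite (assignments n m c)"
proof -
  have "(UNIV :: role set) = {BO, BN, SO, SN}" using role.exhaust by auto
  then have "finite (UNIV :: role set)" by (metis finite.emptyI finite.insertI)
  then have "finite ({1..m+n+2*c} \<rightarrow>\<^sub>E (UNIV :: role set))" by (intro finite_PiE) auto
  then show ?thesis unfolding assignments_def by (rule rev_finite_subset) auto
qed

lemma finite_event_E1: "finite (event_E1 n m c)"
  using event_E1_subset_assignments finite_assignments by (rule finite_subset)

lemma assignments_transpose_closed:
  assumes "\<pi> \<in> assignments n m c" and "a \<in> {1..m+n+2*c}" and "a' \<in> {1..m+n+2*c}"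
  shows "\<pi> \<circ> Transposition.transpose a a' \<in> assignments n m c"
proof -
  let ?N = "m+n+2*c" and ?\<tau> = "Transposition.transpose a a'"
  have "\<pi> \<circ> ?\<tau> \<in> {1..?N} \<rightarrow>\<^sub>E (UNIV :: role set)"
    using assms unfolding assignments_def by (auto simp: PiE_def extensional_def transpose_def)
  moreover have "card {i \<in> {1..?N}. (\<pi> \<circ> ?\<tau>) i = R} = card {i \<in> {1..?N}. \<pi> i = R}" for R
    using card_filter_transpose[of a "{1..?N}" a' "\<lambda>k. \<pi> k = R"] assms by simp
  ultimately show ?thesis using assms unfolding assignments_def by simp
qed

lemma card_agents_transpose:
  assumes "a \<in> Y \<longleftrightarrow> a' \<in> Y" and "a \<in> {1..N}" and "a' \<in> {1..N}"
  shows "card (Y \<inter> agents N (\<pi> \<circ> Transposition.transpose a a') Rs) = card (Y \<inter> agents N \<pi> Rs)"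
proof -
  have "Y \<inter> agents N \<pi>' Rs = {k \<in> Y \<inter> {1..N}. \<pi>' k \<in> Rs}" for \<pi>'
    unfolding agents_def by auto
  then show ?thesis
    using card_filter_transpose[of a "Y \<inter> {1..N}" a' "\<lambda>k. \<pi> k \<in> Rs"] assms by simp
qed

lemma event_E1_transpose_closed:
  fixes n m c :: nat
  defines "N \<equiv> m + n + 2*c" and "p \<equiv> pblk n"
  assumes "\<pi> \<in> event_E1 n m c" and "a \<in> {1..N}" and "a' \<in> {1..N}"
    and "\<forall>Y \<in> {{1..p}, {p+1..2*p}, {N-p+1..N}, {N-2*p+1..N-p}}. a \<in> Y \<longleftrightarrow> a' \<in> Y"
  shows "\<pi> \<circ> Transposition.transpose a a' \<in> event_E1 n m c"
  using assms assignments_transpose_closed card_agents_transpose[OF _ \<open>a \<in> {1..N}\<close> \<open>a' \<in> {1..N}\<close>]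
  unfolding event_E1_def Let_def N_def p_def by simp

section \<open>Averaging over E1\<close>

lemma mean_diff_le:
  fixes f g :: "'a \<Rightarrow> real"
  assumes "finite K" "K \<noteq> {}" "finite L" "L \<noteq> {}"
    and pairwise: "\<And>i j. i \<in> K \<Longrightarrow> j \<in> L \<Longrightarrow> f i - g j \<le> D"
  shows "(\<Sum>i\<in>K. f i) / card K - (\<Sum>j\<in>L. g j) / card L \<le> D"
proof -
  have "(\<Sum>i\<in>K. f i) / card K - D \<le> g j" if "j \<in> L" for j
  proof -
    have "(\<Sum>i\<in>K. f i) \<le> card K * (D + g j)"
      using pairwise[OF _ that] by (intro sum_bounded_above) (simp add: algebra_simps)
    then show ?thesis using assms by (simp add: pos_divide_le_eq card_gt_0_iff algebra_simps)
  qed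
  then have "card L * ((\<Sum>i\<in>K. f i) / card K - D) \<le> (\<Sum>j\<in>L. g j)"
    by (intro sum_bounded_below)
  then have "(\<Sum>i\<in>K. f i) / card K - D \<le> (\<Sum>j\<in>L. g j) / card L"
    using assms by (simp add: pos_le_divide_eq card_gt_0_iff mult.commute)
  then show ?thesis by linarith
qed

lemma sum_STR_minus_OPT_on_event_E1_ge:
  fixes b s :: "real \<Rightarrow> real" and q :: "nat \<Rightarrow> real" and n m c :: nat
  defines "N \<equiv> m + n + 2*c" and "p \<equiv> pblk n" and "E \<equiv> event_E1 n m c"
  assumes anti_b: "antimono_on {1..N} (\<lambda>k. b (q k))" and anti_s: "antimono_on {1..N} (\<lambda>k. s (q k))"
    and dom: "\<forall>k \<in> {1..N}. s (q k) \<le> b (q k)"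
    and "20 \<le> n" and "n \<le> m"
  shows "card E * (\<Sum>i \<in> {1..p}. \<Sum>j \<in> {N-p+1..N}. b (q i) - s (q j)) / (real p * real p)
       \<le> (\<Sum>\<pi> \<in> E. STR_gft b s N q \<pi> - OPT_gft b s N q \<pi>)"
proof -
  have "2 \<le> p" "2 * p \<le> n" using \<open>20 \<le> n\<close> unfolding p_def by (simp_all add: pblk_ge_2 double_pblk_le)
  then have p: "0 < p" "3 * p \<le> N" "card {N-p+1..N} = p" using \<open>n \<le> m\<close> unfolding N_def by auto
  have "finite E" unfolding E_def by (rule finite_event_E1)
  define K where "K \<pi> = {x \<in> {1..p}. \<pi> x = BN}" for \<pi> :: "nat \<Rightarrow> role"
  define L where "L \<pi> = {x \<in> {N-p+1..N}. \<pi> x = SN}" for \<pi> :: "nat \<Rightarrow> role"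
  have new: "\<exists>i \<in> {1..p}. \<pi> i = BN" "\<exists>j \<in> {N-p+1..N}. \<pi> j = SN" if "\<pi> \<in> E" for \<pi>
    using event_E1_new_traders that unfolding E_def N_def p_def by blast+
  have mean: "(\<Sum>i\<in>K \<pi>. b (q i)) / card (K \<pi>) - (\<Sum>j\<in>L \<pi>. s (q j)) / card (L \<pi>)
      \<le> STR_gft b s N q \<pi> - OPT_gft b s N q \<pi>" if "\<pi> \<in> E" for \<pi>
    using new[OF that] pair_gain_le_STR_minus_OPT[OF anti_b[unfolded N_def] anti_s[unfolded N_def]
        dom[unfolded N_def] \<open>20 \<le> n\<close> \<open>n \<le> m\<close>] that
    unfolding K_def L_def E_def N_def p_def by (intro mean_diff_le) auto
  have closed_I: "\<pi> \<circ> Transposition.transpose a a' \<in> E"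
    if "\<pi> \<in> E" and "a \<in> {1..p}" and "a' \<in> {1..p}" for \<pi> a a'
    using that p unfolding E_def N_def p_def by (intro event_E1_transpose_closed) auto
  have closed_J: "\<pi> \<circ> Transposition.transpose a a' \<in> E"
    if "\<pi> \<in> E" and "a \<in> {N-p+1..N}" and "a' \<in> {N-p+1..N}" for \<pi> a a'
    using that p unfolding E_def N_def p_def by (intro event_E1_transpose_closed) auto
  have mean_b: "(\<Sum>\<pi>\<in>E. (\<Sum>i\<in>K \<pi>. b (q i)) / card (K \<pi>)) = card E / card {1..p} * (\<Sum>i\<in>{1..p}. b (q i))"
    unfolding K_def by (rule transpose_invariant_sum_label_mean[OF \<open>finite E\<close> finite_atLeastAtMost closed_I new(1)])
  have mean_s: "(\<Sum>\<pi>\<in>E. (\<Sum>j\<in>L \<pi>. s (q j)) / card (L \<pi>))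
      = card E / card {N-p+1..N} * (\<Sum>j\<in>{N-p+1..N}. s (q j))"
    unfolding L_def by (rule transpose_invariant_sum_label_mean[OF \<open>finite E\<close> finite_atLeastAtMost closed_J new(2)])
  have "card E * (\<Sum>i \<in> {1..p}. \<Sum>j \<in> {N-p+1..N}. b (q i) - s (q j)) / (real p * real p)
      = card E / p * (\<Sum>i\<in>{1..p}. b (q i)) - card E / p * (\<Sum>j\<in>{N-p+1..N}. s (q j))"
    using p by (simp add: sum_subtractf sum_distrib_left field_simps)
  also have "\<dots> = (\<Sum>\<pi>\<in>E. (\<Sum>i\<in>K \<pi>. b (q i)) / card (K \<pi>) - (\<Sum>j\<in>L \<pi>. s (q j)) / card (L \<pi>))"
    using p by (simp add: sum_subtractf mean_b mean_s)
  also have "\<dots> \<le> (\<Sum>\<pi>\<in>E. STR_gft b s N q \<pi> - OPT_gft b s N q \<pi>)"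
    using mean by (rule sum_mono)
  finally show ?thesis .
qed

section \<open>Quantile functions\<close>

lemma quantile_mono:
  assumes "real_distribution M" and "0 < u" and "u \<le> u'" and "u' < 1"
  shows "quantile M u \<le> quantile M u'"
proof -
  interpret real_distribution M by fact
  have "((\<lambda>x. measure M {..x}) \<longlongrightarrow> 1) at_top" using cdf_lim_at_top_prob unfolding cdf_def .
  then have "eventually (\<lambda>x. u' < measure M {..x}) at_top" using assms by (intro order_tendstoD) auto
  then obtain x1 where "u' < measure M {..x1}" by (metis eventually_at_top_linorder order.refl)
  then have nonempty: "{x. u' \<le> measure M {..x}} \<noteq> {}" by (metis empty_iff mem_Collect_eq less_imp_le)
  have "((\<lambda>x. measure M {..x}) \<longlongrightarrow> 0) at_bot" using cdf_lim_at_bot unfolding cdf_def .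
  then have "eventually (\<lambda>x. measure M {..x} < u) at_bot" using assms by (intro order_tendstoD) auto
  then obtain x0 where x0: "\<And>x. x \<le> x0 \<Longrightarrow> measure M {..x} < u" by (metis eventually_at_bot_linorder)
  have "bdd_below {x. u \<le> measure M {..x}}"
    by (rule bdd_belowI[of _ x0]) (metis linorder_le_cases mem_Collect_eq not_le x0)
  moreover have "{x. u' \<le> measure M {..x}} \<subseteq> {x. u \<le> measure M {..x}}" using assms by auto
  ultimately show ?thesis unfolding quantile_def using nonempty by (intro cInf_superset_mono) auto
qed

lemma quantile_comp_antimono_on:
  assumes "real_distribution M" and "\<forall>i \<in> A. 0 < q i \<and> q i < 1" and "antimono_on A q"
  shows "antimono_on A (\<lambda>i. quantile M (q i))"
proof (rule monotone_onI)
  fix i j assume "i \<in> A" "j \<in> A" "i \<le> j"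
  then have "q j \<le> q i" using monotone_onD[OF assms(3)] by blast
  then show "quantile M (q j) \<le> quantile M (q i)"
    using assms \<open>i \<in> A\<close> \<open>j \<in> A\<close> by (intro quantile_mono) auto
qed

theorem lemma3p1:
  fixes FB FS :: "real measure" and n m c :: nat and q :: "nat \<Rightarrow> real"
  defines "b \<equiv> quantile FB" and "s \<equiv> quantile FS"
      and "N \<equiv> m + n + 2*c" and "p \<equiv> pblk n"
  assumes "real_distribution FB" and "real_distribution FS"
      and fosd: "\<forall>u \<in> {0<..<1}. s u \<le> b u"
      and "20 \<le> n" and "n \<le> m" and "1 \<le> c"
      and q_range: "\<forall>i \<in> {1..N}. 0 < q i \<and> q i < 1"
      and q_mono: "\<forall>i j. 1 \<le> i \<and> i \<le> j \<and> j \<le> N \<longrightarrow> q j \<le> q i"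
  shows "(\<forall>\<pi> \<in> event_E1 n m c. OPT_gft b s N q \<pi> \<le> STR_gft b s N q \<pi>) \<and>
         (event_E1 n m c \<noteq> {} \<longrightarrow>
            (\<Sum>\<pi> \<in> event_E1 n m c. STR_gft b s N q \<pi> - OPT_gft b s N q \<pi>) / real (card (event_E1 n m c))
            \<ge> (\<Sum>i \<in> {1..p}. \<Sum>j \<in> {N-p+1..N}. b (q i) - s (q j)) / (real p * real p))"
proof -
  have "antimono_on {1..N} q" using q_mono by (auto intro: monotone_onI)
  then have anti_b: "antimono_on {1..m+n+2*c} (\<lambda>k. b (q k))"
    and anti_s: "antimono_on {1..m+n+2*c} (\<lambda>k. s (q k))"
    using quantile_comp_antimono_on \<open>real_distribution FB\<close> \<open>real_distribution FS\<close> q_range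
    unfolding b_def s_def N_def by blast+
  have dom: "\<forall>k \<in> {1..m+n+2*c}. s (q k) \<le> b (q k)" using fosd q_range unfolding N_def by auto
  note market = anti_b anti_s dom \<open>20 \<le> n\<close> \<open>n \<le> m\<close>
  have "card (event_E1 n m c) * ((\<Sum>i \<in> {1..p}. \<Sum>j \<in> {N-p+1..N}. b (q i) - s (q j)) / (real p * real p))
      \<le> (\<Sum>\<pi> \<in> event_E1 n m c. STR_gft b s N q \<pi> - OPT_gft b s N q \<pi>)"
    using sum_STR_minus_OPT_on_event_E1_ge[OF market] unfolding N_def p_def by simp
  then show ?thesis
    using OPT_le_STR_on_event_E1[OF market] finite_event_E1 unfolding N_def
    by (auto simp: pos_le_divide_eq card_gt_0_iff mult.commute)
qed

end
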